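(* Let $V$ be a locally convex space, $\Omega\subset V$ open, and $g$ a Riemannian metric on $\Omega$ with Levi–Civita connection $D=d+A$ of class $C^1$ and curvature $R$. Let $I\subset\mathbb R$ be an interval, $x\in C^2(I,\Omega)$ a geodesic, $\xi\in C^1(I,V)$, and $\tau\in I$. Suppose there is a collection $H$ of Jacobi fields $\eta$ along $x|J_\eta$, where $J_\eta\subset I$ is a neighborhood of $\tau$, such that each $\eta\in H$ vanishes at $\tau$ and $\{\dot\eta(\tau)\colon\eta\in H\}$ is dense in $V$. Then for every $\eta\in H$ the function $t\mapsto g\big(x(t),\xi(t),\eta(t)\big)$ is twice differentiable at $\tau$, and $D_{\dot x}\xi(\tau)=0$ if and only if $$ \frac{d^2}{dt^2}g\big(x(t),\xi(t),\eta(t)\big)\Big|_{t=\tau}=0\qquad\text{for all }\eta\in H. $$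
   Context: All locally convex spaces are real, Hausdorff and sequentially complete. $f$ is $C^1$ if directional derivatives $df(v,\xi)=\lim_{t\to0}(f(v+t\xi)-f(v))/t$ exist and $df$ is continuous; $C^k$ inductively. A Riemannian metric on $\Omega$ is a map $g\colon\Omega\times V\times V\to\mathbb R$ with each $g(v,\cdot,\cdot)$ positive definite symmetric bilinear. For a $C^1$ metric $g$, a Levi–Civita connection is $D_\xi\varphi(v)=d\varphi(v,\xi)+A(v,\xi)\varphi(v)$ with $A(v,\xi)$ a continuous linear map $V\to V$, linear in $\xi$, $(v,\xi,w)\mapsto A(v,\xi)w$ continuous, $A(v,\xi)\eta=A(v,\eta)\xi$, and $\xi g(\cdot,\varphi,\psi)=g(\cdot,D_\xi\varphi,\psi)+g(\cdot,\varphi,D_\xi\psi)$ for all $\xi\in V$, $\varphi,\psi\in C^1(\Omega,V)$; it is of class $C^k$ if $(v,\xi,w)\mapsto A(v,\xi)w$ is $C^k$. Its curvature is $R(v,\xi,\eta)=(\xi A(\cdot,\eta))(v)-(\eta A(\cdot,\xi))(v)+A(v,\xi)A(v,\eta)-A(v,\eta)A(v,\xi)$. For $x\in C^1(I,\Omega)$ and $\varphi\in C^1(I,V)$, $D_{\dot x}\varphi(t)=\dot\varphi(t)+A\big(x(t),\dot x(t)\big)\varphi(t)$ (dot is $d/dt$). A geodesic is a $C^2$ curve with $D_{\dot x}\dot x=0$. A Jacobi field along a geodesic $x$ (on an interval $J$) is $\varphi\in C^2(J,V)$ with $D_{\dot x}^2\varphi=R(x,\dot x,\varphi)\dot x$.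 *)

theory Defs
  imports "HOL-Analysis.Analysis"
begin

text \<open>The ambient type is a real vector space with a Hausdorff topology (class t2_space);
  the predicate below adds continuity of the vector operations, local convexity
  (0 has a basis of convex open neighbourhoods) and sequential completeness.\<close>

definition lcs_type :: "'v::{real_vector,t2_space} itself \<Rightarrow> bool" where
  "lcs_type _ \<longleftrightarrow>
     continuous_on UNIV (\<lambda>p::'v \<times> 'v. fst p + snd p) \<and>
     continuous_on UNIV (\<lambda>p::real \<times> 'v. fst p *\<^sub>R snd p) \<and>
     (\<forall>U::'v set. open U \<and> 0 \<in> U \<longrightarrow> (\<exists>W. open W \<and> convex W \<and> 0 \<in> W \<and> W \<subseteq> U)) \<and>
     (\<forall>X::nat \<Rightarrow> 'v.
        (\<forall>U. open U \<and> 0 \<in> U \<longrightarrow> (\<exists>N. \<forall>m\<ge>N. \<forall>n\<ge>N. X m - X n \<in> U))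
        \<longrightarrow> (\<exists>L. X \<longlonglongrightarrow> L))"

definition dd :: "('a::real_vector \<Rightarrow> 'b::{real_vector,t2_space}) \<Rightarrow> 'a \<Rightarrow> 'a \<Rightarrow> 'b" where
  "dd f v \<xi> = Lim (at (0::real)) (\<lambda>t. (f (v + t *\<^sub>R \<xi>) - f v) /\<^sub>R t)"

definition C1_on :: "'a::{real_vector,t2_space} set \<Rightarrow> ('a \<Rightarrow> 'b::{real_vector,t2_space}) \<Rightarrow> bool" where
  "C1_on U f \<longleftrightarrow>
     (\<forall>v\<in>U. \<forall>\<xi>. ((\<lambda>t::real. (f (v + t *\<^sub>R \<xi>) - f v) /\<^sub>R t) \<longlongrightarrow> dd f v \<xi>) (at 0)) \<and>
     continuous_on (U \<times> UNIV) (\<lambda>(v, \<xi>). dd f v \<xi>)"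

definition vderiv :: "real set \<Rightarrow> (real \<Rightarrow> 'v::{real_vector,t2_space}) \<Rightarrow> real \<Rightarrow> 'v" where
  "vderiv J f t = Lim (at t within J) (\<lambda>s. (f s - f t) /\<^sub>R (s - t))"

definition has_vd :: "real set \<Rightarrow> (real \<Rightarrow> 'v::{real_vector,t2_space}) \<Rightarrow> real \<Rightarrow> bool" where
  "has_vd J f t \<longleftrightarrow> ((\<lambda>s. (f s - f t) /\<^sub>R (s - t)) \<longlongrightarrow> vderiv J f t) (at t within J)"

definition C1_curve :: "real set \<Rightarrow> (real \<Rightarrow> 'v::{real_vector,t2_space}) \<Rightarrow> bool" where
  "C1_curve J f \<longleftrightarrow> (\<forall>t\<in>J. has_vd J f t) \<and> continuous_on J (vderiv J f)"

definition C2_curve :: "real set \<Rightarrow> (real \<Rightarrow> 'v::{real_vector,t2_space}) \<Rightarrow> bool" where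
  "C2_curve J f \<longleftrightarrow> C1_curve J f \<and> C1_curve J (vderiv J f)"

definition twice_diff_at :: "real set \<Rightarrow> (real \<Rightarrow> 'v::{real_vector,t2_space}) \<Rightarrow> real \<Rightarrow> bool" where
  "twice_diff_at J f \<tau> \<longleftrightarrow>
     (\<exists>e>0. \<forall>t\<in>J \<inter> ball \<tau> e. has_vd J f t) \<and> has_vd J (vderiv J f) \<tau>"

definition riem_metric :: "'v::real_vector set \<Rightarrow> ('v \<Rightarrow> 'v \<Rightarrow> 'v \<Rightarrow> real) \<Rightarrow> bool" where
  "riem_metric \<Omega> g \<longleftrightarrow> (\<forall>v\<in>\<Omega>.
     (\<forall>a b. g v a b = g v b a) \<and>
     (\<forall>b. linear (\<lambda>a. g v a b)) \<and> (\<forall>a. linear (\<lambda>b. g v a b)) \<and>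
     (\<forall>a. a \<noteq> 0 \<longrightarrow> g v a a > 0))"

definition covD :: "('v \<Rightarrow> 'v \<Rightarrow> 'v \<Rightarrow> 'v) \<Rightarrow> 'v \<Rightarrow> ('v::{real_vector,t2_space} \<Rightarrow> 'v) \<Rightarrow> 'v \<Rightarrow> 'v" where
  "covD A \<xi> \<phi> v = dd \<phi> v \<xi> + A v \<xi> (\<phi> v)"

text \<open>A v \<xi> w stands for A(v,\<xi>)w.\<close>
definition levi_civita :: "'v::{real_vector,t2_space} set \<Rightarrow> ('v \<Rightarrow> 'v \<Rightarrow> 'v \<Rightarrow> real)
      \<Rightarrow> ('v \<Rightarrow> 'v \<Rightarrow> 'v \<Rightarrow> 'v) \<Rightarrow> bool" where
  "levi_civita \<Omega> g A \<longleftrightarrow>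
     (\<forall>v\<in>\<Omega>. \<forall>\<xi>. linear (A v \<xi>) \<and> continuous_on UNIV (A v \<xi>)) \<and>
     (\<forall>v\<in>\<Omega>. \<forall>w. linear (\<lambda>\<xi>. A v \<xi> w)) \<and>
     continuous_on (\<Omega> \<times> UNIV \<times> UNIV) (\<lambda>(v, \<xi>, w). A v \<xi> w) \<and>
     (\<forall>v\<in>\<Omega>. \<forall>\<xi> \<eta>. A v \<xi> \<eta> = A v \<eta> \<xi>) \<and>
     (\<forall>\<xi> \<phi> \<psi>. C1_on \<Omega> \<phi> \<and> C1_on \<Omega> \<psi> \<longrightarrow>
        (\<forall>v\<in>\<Omega>. ((\<lambda>t::real. (g (v + t *\<^sub>R \<xi>) (\<phi> (v + t *\<^sub>R \<xi>)) (\<psi> (v + t *\<^sub>R \<xi>))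
                               - g v (\<phi> v) (\<psi> v)) / t)
                 \<longlongrightarrow> g v (covD A \<xi> \<phi> v) (\<psi> v) + g v (\<phi> v) (covD A \<xi> \<psi> v)) (at 0)))"

definition curv :: "('v::{real_vector,t2_space} \<Rightarrow> 'v \<Rightarrow> 'v \<Rightarrow> 'v) \<Rightarrow> 'v \<Rightarrow> 'v \<Rightarrow> 'v \<Rightarrow> 'v \<Rightarrow> 'v" where
  "curv A v \<xi> \<eta> w = dd (\<lambda>u. A u \<eta> w) v \<xi> - dd (\<lambda>u. A u \<xi> w) v \<eta>
                      + A v \<xi> (A v \<eta> w) - A v \<eta> (A v \<xi> w)"

definition covD_curve :: "('v \<Rightarrow> 'v \<Rightarrow> 'v \<Rightarrow> 'v) \<Rightarrow> real set \<Rightarrow> (real \<Rightarrow> 'v::{real_vector,t2_space})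
      \<Rightarrow> (real \<Rightarrow> 'v) \<Rightarrow> real \<Rightarrow> 'v" where
  "covD_curve A J x \<phi> t = vderiv J \<phi> t + A (x t) (vderiv J x t) (\<phi> t)"

definition geodesic :: "'v::{real_vector,t2_space} set \<Rightarrow> ('v \<Rightarrow> 'v \<Rightarrow> 'v \<Rightarrow> 'v) \<Rightarrow> real set
      \<Rightarrow> (real \<Rightarrow> 'v) \<Rightarrow> bool" where
  "geodesic \<Omega> A I x \<longleftrightarrow> C2_curve I x \<and> x ` I \<subseteq> \<Omega> \<and>
     (\<forall>t\<in>I. covD_curve A I x (vderiv I x) t = 0)"

definition jacobi_field :: "('v::{real_vector,t2_space} \<Rightarrow> 'v \<Rightarrow> 'v \<Rightarrow> 'v) \<Rightarrow> (real \<Rightarrow> 'v) \<Rightarrow> real set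
      \<Rightarrow> (real \<Rightarrow> 'v) \<Rightarrow> bool" where
  "jacobi_field A x J \<phi> \<longleftrightarrow> C2_curve J \<phi> \<and>
     (\<forall>t\<in>J. covD_curve A J x (covD_curve A J x \<phi>) t
              = curv A (x t) (vderiv J x t) (\<phi> t) (vderiv J x t))"

end

(* For f = g(x, \<xi>, \<eta>), compatibility of D with the metric gives f' = g(D\<xi>, \<eta>) + g(\<xi>, D\<eta>).
   At \<tau>, where \<eta> vanishes, the first term has derivative g(D\<xi>, \<eta>') without any derivative
   of D\<xi> being needed, and the second has derivative g(D\<xi>, D\<eta>) + g(\<xi>, D\<^sup>2\<eta>) with
   D\<eta>(\<tau>) = \<eta>'(\<tau>) and D\<^sup>2\<eta>(\<tau>) = R(x, x', \<eta>(\<tau>))x' = 0. So f''(\<tau>) = 2 g(D\<xi>(\<tau>), \<eta>'(\<tau>)),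
   and density of the \<eta>'(\<tau>) together with continuity of g(x(\<tau>), D\<xi>(\<tau>), -) gives the equivalence. *)

theory Submission
  imports Defs
begin

section \<open>Continuity of the vector operations\<close>

definition continuous_vector_ops :: "'a::{real_vector,t2_space} itself \<Rightarrow> bool" where
  "continuous_vector_ops _ \<longleftrightarrow> continuous_on UNIV (\<lambda>p::'a \<times> 'a. fst p + snd p) \<and>
     continuous_on UNIV (\<lambda>p::real \<times> 'a. fst p *\<^sub>R snd p)"

lemma lcs_type_continuous_vector_ops:
  "lcs_type TYPE('a::{real_vector,t2_space}) \<Longrightarrow> continuous_vector_ops TYPE('a)"
  unfolding lcs_type_def continuous_vector_ops_def by blast

lemma tendsto_add_vector_ops:
  assumes "continuous_vector_ops TYPE('a::{real_vector,t2_space})"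
    and "(f \<longlongrightarrow> a) F" "(g \<longlongrightarrow> b) F"
  shows "((\<lambda>k. f k + g k :: 'a) \<longlongrightarrow> a + b) F"
proof -
  have "isCont (\<lambda>p::'a \<times> 'a. fst p + snd p) (a, b)"
    using assms(1) unfolding continuous_vector_ops_def by (simp add: continuous_on_eq_continuous_at)
  from isCont_tendsto_compose[OF this tendsto_Pair[OF assms(2,3)]] show ?thesis by simp
qed

lemma tendsto_scaleR_vector_ops:
  assumes "continuous_vector_ops TYPE('a::{real_vector,t2_space})"
    and "(f \<longlongrightarrow> a) F" "(g \<longlongrightarrow> b) F"
  shows "((\<lambda>k. f k *\<^sub>R g k :: 'a) \<longlongrightarrow> a *\<^sub>R b) F"
proof -
  have "isCont (\<lambda>p::real \<times> 'a. fst p *\<^sub>R snd p) (a, b)"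
    using assms(1) unfolding continuous_vector_ops_def by (simp add: continuous_on_eq_continuous_at)
  from isCont_tendsto_compose[OF this tendsto_Pair[OF assms(2,3)]] show ?thesis by simp
qed

lemma continuous_vector_ops_prod:
  assumes a: "continuous_vector_ops TYPE('a::{real_vector,t2_space})"
    and b: "continuous_vector_ops TYPE('b::{real_vector,t2_space})"
  shows "continuous_vector_ops TYPE('a \<times> 'b)"
  unfolding continuous_vector_ops_def continuous_on_eq_continuous_at[OF open_UNIV] isCont_def
proof (intro conjI ballI)
  fix p :: "('a \<times> 'b) \<times> ('a \<times> 'b)"
  have "((\<lambda>q. (fst (fst q) + fst (snd q), snd (fst q) + snd (snd q)))
      \<longlongrightarrow> (fst (fst p) + fst (snd p), snd (fst p) + snd (snd p))) (at p)"
    by (intro tendsto_Pair tendsto_add_vector_ops[OF a] tendsto_add_vector_ops[OF b]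
        tendsto_fst tendsto_snd tendsto_ident_at)
  then show "((\<lambda>q. fst q + snd q) \<longlongrightarrow> fst p + snd p) (at p)"
    by (simp add: plus_prod_def case_prod_beta)
next
  fix p :: "real \<times> ('a \<times> 'b)"
  have "((\<lambda>q. (fst q *\<^sub>R fst (snd q), fst q *\<^sub>R snd (snd q)))
      \<longlongrightarrow> (fst p *\<^sub>R fst (snd p), fst p *\<^sub>R snd (snd p))) (at p)"
    by (intro tendsto_Pair tendsto_scaleR_vector_ops[OF a] tendsto_scaleR_vector_ops[OF b]
        tendsto_fst tendsto_snd tendsto_ident_at)
  then show "((\<lambda>q. fst q *\<^sub>R snd q) \<longlongrightarrow> fst p *\<^sub>R snd p) (at p)"
    by (simp add: scaleR_prod_def case_prod_beta)
qed

lemma lcs_eventually_segment_in_open: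
  fixes \<Omega> :: "'v::{real_vector,t2_space} set"
  assumes lcs: "lcs_type TYPE('v)" and "open \<Omega>" and "v \<in> \<Omega>" and d: "(d \<longlongrightarrow> 0) F"
  shows "eventually (\<lambda>k. \<forall>c\<in>{0..1}. v + c *\<^sub>R d k \<in> \<Omega>) F"
proof -
  have ops: "continuous_vector_ops TYPE('v)"
    using lcs by (rule lcs_type_continuous_vector_ops)
  have "continuous_on UNIV (\<lambda>u::'v. v + u)"
    unfolding continuous_on_eq_continuous_at[OF open_UNIV] isCont_def
    using tendsto_add_vector_ops[OF ops tendsto_const tendsto_ident_at] by blast
  then have "open ((\<lambda>u. v + u) -` \<Omega>)"
    using \<open>open \<Omega>\<close> by (simp add: continuous_on_open_vimage[OF open_UNIV])
  then obtain W where W: "open W" "convex W" "0 \<in> W" "W \<subseteq> (\<lambda>u. v + u) -` \<Omega>"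
    using lcs \<open>v \<in> \<Omega>\<close> unfolding lcs_type_def by force
  have "eventually (\<lambda>k. d k \<in> W) F"
    using topological_tendstoD[OF d W(1,3)] .
  then show ?thesis
  proof (rule eventually_mono)
    fix k assume "d k \<in> W"
    have "c *\<^sub>R d k \<in> W" if "c \<in> {0..1}" for c
      using convexD[OF W(2,3) \<open>d k \<in> W\<close>, of "1 - c" c] that by auto
    then show "\<forall>c\<in>{0..1}. v + c *\<^sub>R d k \<in> \<Omega>" using W(4) by blast
  qed
qed

section \<open>Directional derivatives\<close>

lemma dd_eqI:
  assumes "((\<lambda>t. (f (v + t *\<^sub>R \<xi>) - f v) /\<^sub>R t) \<longlongrightarrow> L) (at (0::real))"
  shows "dd f v \<xi> = (L::'b::{real_vector,t2_space})"
  unfolding dd_def by (rule tendsto_Lim) (simp_all add: assms)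

lemma dd_const: "dd (\<lambda>_. c) v \<xi> = (0::'b::{real_vector,t2_space})"
  by (rule dd_eqI) simp

lemma C1_on_const: "C1_on U (\<lambda>_. c::'b::{real_vector,t2_space})"
  unfolding C1_on_def dd_const by simp

lemma C1_on_has_real_derivative_line:
  fixes G :: "'a::{real_vector,t2_space} \<Rightarrow> real"
  assumes "C1_on U G" and "Y + r *\<^sub>R Z \<in> U"
  shows "((\<lambda>s. G (Y + s *\<^sub>R Z)) has_real_derivative dd G (Y + r *\<^sub>R Z) Z) (at r)"
proof -
  have "((\<lambda>t. (G ((Y + r *\<^sub>R Z) + t *\<^sub>R Z) - G (Y + r *\<^sub>R Z)) /\<^sub>R t) \<longlongrightarrow> dd G (Y + r *\<^sub>R Z) Z) (at 0)"
    using assms unfolding C1_on_def by blast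
  moreover have "(\<lambda>h. (G (Y + (r + h) *\<^sub>R Z) - G (Y + r *\<^sub>R Z)) / (r + h - r))
      = (\<lambda>t. (G ((Y + r *\<^sub>R Z) + t *\<^sub>R Z) - G (Y + r *\<^sub>R Z)) /\<^sub>R t)"
    by (simp add: scaleR_add_left add.assoc divide_inverse mult.commute)
  ultimately show ?thesis
    unfolding has_field_derivative_iff by (subst LIM_offset_zero_iff) simp_all
qed

lemma C1_on_mean_value:
  fixes G :: "'a::{real_vector,t2_space} \<Rightarrow> real"
  assumes C1: "C1_on U G" and "H \<noteq> 0" and seg: "\<forall>c\<in>{0..1}. Y + (c * H) *\<^sub>R Z \<in> U"
  shows "\<exists>c\<in>{0..1}. (G (Y + H *\<^sub>R Z) - G Y) / H = dd G (Y + (c * H) *\<^sub>R Z) Z"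
proof -
  define lo hi where "lo = min 0 H" and "hi = max 0 H"
  have "lo < hi" using \<open>H \<noteq> 0\<close> by (auto simp: lo_def hi_def)
  have "s / H \<in> {0..1}" if "lo \<le> s" "s \<le> hi" for s
    using that \<open>H \<noteq> 0\<close> by (cases "H > 0") (auto simp: lo_def hi_def field_simps)
  then have "DERIV (\<lambda>s. G (Y + s *\<^sub>R Z)) s :> dd G (Y + s *\<^sub>R Z) Z" if "lo \<le> s" "s \<le> hi" for s
    using seg \<open>H \<noteq> 0\<close> that by (intro C1_on_has_real_derivative_line[OF C1]) force
  from MVT2[OF \<open>lo < hi\<close> this] obtain z where z: "lo < z" "z < hi"
    and eq: "G (Y + hi *\<^sub>R Z) - G (Y + lo *\<^sub>R Z) = (hi - lo) * dd G (Y + z *\<^sub>R Z) Z"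
    by blast
  have "(G (Y + H *\<^sub>R Z) - G Y) / H = dd G (Y + (z / H * H) *\<^sub>R Z) Z"
    using eq \<open>H \<noteq> 0\<close> by (cases "H > 0") (auto simp: lo_def hi_def field_simps)
  moreover have "z / H \<in> {0..1}"
    using z \<open>H \<noteq> 0\<close> by (cases "H > 0") (auto simp: lo_def hi_def field_simps)
  ultimately show ?thesis by blast
qed

lemma C1_on_diff_quotient_tendsto:
  fixes G :: "'a::{real_vector,t2_space} \<Rightarrow> real"
  assumes ops: "continuous_vector_ops TYPE('a)" and C1: "C1_on U G" and "p \<in> U"
    and y: "(y \<longlongrightarrow> p) F" and z: "(z \<longlongrightarrow> z0) F" and h: "(h \<longlongrightarrow> 0) F"
    and seg: "eventually (\<lambda>k. h k \<noteq> 0 \<and> (\<forall>c\<in>{0..1}. y k + (c * h k) *\<^sub>R z k \<in> U)) F"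
  shows "((\<lambda>k. (G (y k + h k *\<^sub>R z k) - G (y k)) / h k) \<longlongrightarrow> dd G p z0) F"
proof -
  define P where "P k c \<longleftrightarrow> c \<in> {0..1::real} \<and> y k + (c * h k) *\<^sub>R z k \<in> U \<and>
      (G (y k + h k *\<^sub>R z k) - G (y k)) / h k = dd G (y k + (c * h k) *\<^sub>R z k) (z k)" for k c
  define c where "c k = (SOME c. P k c)" for k
  have evP: "eventually (\<lambda>k. P k (c k)) F"
    using seg
  proof (rule eventually_mono)
    fix k assume k: "h k \<noteq> 0 \<and> (\<forall>c\<in>{0..1}. y k + (c * h k) *\<^sub>R z k \<in> U)"
    then have "\<exists>c. P k c"
      using C1_on_mean_value[OF C1, of "h k" "y k" "z k"] unfolding P_def by blast
    then show "P k (c k)" unfolding c_def by (rule someI_ex)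
  qed
  have "((\<lambda>k. c k * h k) \<longlongrightarrow> 0) F"
  proof (rule tendsto_sandwich[of "\<lambda>k. - \<bar>h k\<bar>" _ _ "\<lambda>k. \<bar>h k\<bar>"])
    have "eventually (\<lambda>k. \<bar>c k * h k\<bar> \<le> \<bar>h k\<bar>) F"
      using evP by (rule eventually_mono) (auto simp: P_def abs_mult mult_left_le_one_le)
    then show "eventually (\<lambda>k. - \<bar>h k\<bar> \<le> c k * h k) F" "eventually (\<lambda>k. c k * h k \<le> \<bar>h k\<bar>) F"
      by (auto elim: eventually_mono)
  qed (use tendsto_rabs[OF h] tendsto_minus[OF tendsto_rabs[OF h]] in simp_all)
  from tendsto_add_vector_ops[OF ops y tendsto_scaleR_vector_ops[OF ops this z]]
  have w: "((\<lambda>k. y k + (c k * h k) *\<^sub>R z k) \<longlongrightarrow> p) F" by simp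
  have cont: "continuous_on (U \<times> UNIV) (\<lambda>(v, \<xi>). dd G v \<xi>)"
    using C1 unfolding C1_on_def by blast
  have "((\<lambda>k. (\<lambda>(v, \<xi>). dd G v \<xi>) (y k + (c k * h k) *\<^sub>R z k, z k))
      \<longlongrightarrow> (\<lambda>(v, \<xi>). dd G v \<xi>) (p, z0)) F"
    by (rule continuous_on_tendsto_compose[OF cont tendsto_Pair[OF w z]])
      (use \<open>p \<in> U\<close> evP in \<open>auto simp: P_def elim: eventually_mono\<close>)
  then have "((\<lambda>k. dd G (y k + (c k * h k) *\<^sub>R z k) (z k)) \<longlongrightarrow> dd G p z0) F"
    by simp
  then show ?thesis
    by (rule Lim_transform_eventually) (use evP in \<open>auto simp: P_def elim: eventually_mono\<close>)
qed

section \<open>Derivatives of curves\<close>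

lemma has_vd_vderivI:
  assumes "((\<lambda>s. (f s - f t) /\<^sub>R (s - t)) \<longlongrightarrow> L) (at t within S)" and "at t within S \<noteq> bot"
  shows "has_vd S f t \<and> vderiv S f t = L"
proof -
  have "vderiv S f t = L"
    unfolding vderiv_def using tendsto_Lim[OF assms(2,1)] .
  with assms(1) show ?thesis unfolding has_vd_def by simp
qed

lemma vderiv_cong:
  assumes "\<And>s. s \<in> S \<Longrightarrow> f s = f' s" and "t \<in> S"
  shows "vderiv S f t = vderiv S f' t" and "has_vd S f t \<longleftrightarrow> has_vd S f' t"
proof -
  have ev: "eventually (\<lambda>s. (f s - f t) /\<^sub>R (s - t) = (f' s - f' t) /\<^sub>R (s - t)) (at t within S)"
    using assms by (auto simp: eventually_at_filter)
  then show "vderiv S f t = vderiv S f' t"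
    unfolding vderiv_def by (rule Lim_cong) simp
  with tendsto_cong[OF ev] show "has_vd S f t \<longleftrightarrow> has_vd S f' t"
    unfolding has_vd_def by simp
qed

lemma has_vd_tendsto:
  assumes "continuous_vector_ops TYPE('v::{real_vector,t2_space})" and "has_vd S (f :: real \<Rightarrow> 'v) t"
  shows "(f \<longlongrightarrow> f t) (at t within S)"
proof -
  have "((\<lambda>s. s - t) \<longlongrightarrow> 0) (at t within S)"
    using tendsto_diff[OF tendsto_ident_at[of t S] tendsto_const[of t]] by simp
  from tendsto_add_vector_ops[OF assms(1)
      tendsto_scaleR_vector_ops[OF assms(1) this assms(2)[unfolded has_vd_def]] tendsto_const]
  have "((\<lambda>s. (s - t) *\<^sub>R ((f s - f t) /\<^sub>R (s - t)) + f t) \<longlongrightarrow> f t) (at t within S)"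
    by simp
  then show ?thesis
    by (rule Lim_transform_eventually) (auto simp: eventually_at_filter)
qed

lemma continuous_vector_ops_real_normed_vector:
  "continuous_vector_ops TYPE('a::real_normed_vector)"
  unfolding continuous_vector_ops_def by (intro conjI continuous_intros)

lemma has_vd_add:
  assumes ops: "continuous_vector_ops TYPE('v::{real_vector,t2_space})"
    and "at t within S \<noteq> bot" and f: "has_vd S (f :: real \<Rightarrow> 'v) t" and h: "has_vd S h t"
  shows "has_vd S (\<lambda>s. f s + h s) t \<and> vderiv S (\<lambda>s. f s + h s) t = vderiv S f t + vderiv S h t"
proof (rule has_vd_vderivI[OF _ assms(2)])
  show "((\<lambda>s. (f s + h s - (f t + h t)) /\<^sub>R (s - t)) \<longlongrightarrow> vderiv S f t + vderiv S h t) (at t within S)"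
    using tendsto_add_vector_ops[OF ops f[unfolded has_vd_def] h[unfolded has_vd_def]]
    by (simp add: algebra_simps)
qed

lemma has_vd_subset:
  assumes "has_vd I f t" and "S \<subseteq> I" and "at t within S \<noteq> bot"
  shows "has_vd S f t \<and> vderiv S f t = vderiv I f t"
  using assms tendsto_within_subset[of _ _ t I S]
  by (intro has_vd_vderivI) (simp_all add: has_vd_def)

lemma C1_curve_subset:
  assumes f: "C1_curve I f" and "S \<subseteq> I" and nontriv: "\<And>t. t \<in> S \<Longrightarrow> at t within S \<noteq> bot"
  shows "C1_curve S f" and "\<And>t. t \<in> S \<Longrightarrow> vderiv S f t = vderiv I f t"
proof -
  have vd: "has_vd S f t \<and> vderiv S f t = vderiv I f t" if "t \<in> S" for t
    using f \<open>S \<subseteq> I\<close> that by (intro has_vd_subset nontriv) (auto simp: C1_curve_def)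
  then show "vderiv S f t = vderiv I f t" if "t \<in> S" for t
    using that by blast
  have "continuous_on S (vderiv I f)"
    using f \<open>S \<subseteq> I\<close> unfolding C1_curve_def by (blast intro: continuous_on_subset)
  then have "continuous_on S (vderiv S f)"
    using vd by (auto cong: continuous_on_cong)
  with vd show "C1_curve S f" unfolding C1_curve_def by blast
qed

lemma interval_at_within_nontrivial:
  fixes S :: "real set"
  assumes "is_interval S" and "t \<in> S" and "u \<in> S" "w \<in> S" "u \<noteq> w"
  shows "at t within S \<noteq> bot"
proof -
  have "S \<noteq> {y}" for y using assms(3-5) by blast
  then have "t islimpt S"
    using assms(1,2) by (intro connected_imp_perfect) (simp_all add: is_interval_connected_1)
  then show ?thesis using trivial_limit_within by blast
qed

lemma interval_nbhd_at_within_nontrivial: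
  fixes I J :: "real set"
  assumes "is_interval I" "a \<in> I" "b \<in> I" "a < b" "\<tau> \<in> I"
    and "is_interval J" "\<tau> \<in> J" "e > 0" "I \<inter> ball \<tau> e \<subseteq> J" and "t \<in> J"
  shows "at t within J \<noteq> bot"
proof -
  have "\<tau> islimpt I"
    using interval_at_within_nontrivial[of I \<tau> a b] assms(1-5) trivial_limit_within by auto
  then have "\<tau> islimpt I \<inter> ball \<tau> e"
    using \<open>e > 0\<close> by (intro islimpt_Int_eventually eventually_at_in_open') simp_all
  then obtain u where "u \<in> J" "u \<noteq> \<tau>"
    using \<open>I \<inter> ball \<tau> e \<subseteq> J\<close> by (meson islimptE islimpt_subset open_UNIV UNIV_I)
  then show ?thesis
    using interval_at_within_nontrivial[OF \<open>is_interval J\<close> \<open>t \<in> J\<close>] \<open>\<tau> \<in> J\<close> by blast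
qed

section \<open>Metric and connection\<close>

lemma riem_metric_bilinear:
  assumes "riem_metric \<Omega> g" and "v \<in> \<Omega>"
  shows "g v (a + a') b = g v a b + g v a' b" "g v (r *\<^sub>R a) b = r * g v a b"
    "g v a (b + b') = g v a b + g v a b'" "g v a (r *\<^sub>R b) = r * g v a b"
    "g v 0 b = 0" "g v a 0 = 0" "g v (a - a') b = g v a b - g v a' b"
    "g v a (b - b') = g v a b - g v a b'"
proof -
  have l: "linear (\<lambda>a. g v a b)" "linear (\<lambda>b. g v a b)" for a b
    using assms unfolding riem_metric_def by blast+
  show "g v (a + a') b = g v a b + g v a' b" "g v (r *\<^sub>R a) b = r * g v a b"
    "g v 0 b = 0" "g v (a - a') b = g v a b - g v a' b"
    using linear_add[OF l(1)] linear_cmul[OF l(1)] linear_0[OF l(1)] linear_diff[OF l(1)] by simp_all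
  show "g v a (b + b') = g v a b + g v a b'" "g v a (r *\<^sub>R b) = r * g v a b"
    "g v a 0 = 0" "g v a (b - b') = g v a b - g v a b'"
    using linear_add[OF l(2)] linear_cmul[OF l(2)] linear_0[OF l(2)] linear_diff[OF l(2)] by simp_all
qed

lemma levi_civita_linear:
  assumes "levi_civita \<Omega> g A" and "v \<in> \<Omega>"
  shows "A v w (r *\<^sub>R u) = r *\<^sub>R A v w u" "A v w 0 = 0" "A v 0 u = 0"
    "A v w (u + u') = A v w u + A v w u'" "A v w (u - u') = A v w u - A v w u'"
proof -
  have l: "linear (A v w)" "linear (\<lambda>w. A v w u)" for w u
    using assms unfolding levi_civita_def by blast+
  show "A v w (r *\<^sub>R u) = r *\<^sub>R A v w u" "A v w 0 = 0" "A v w (u + u') = A v w u + A v w u'"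
    "A v w (u - u') = A v w u - A v w u'"
    using linear_cmul[OF l(1)] linear_0[OF l(1)] linear_add[OF l(1)] linear_diff[OF l(1)] by simp_all
  show "A v 0 u = 0" using linear_0[OF l(2)] by simp
qed

lemma dd_metric_fibre:
  assumes "riem_metric \<Omega> g" and "v \<in> \<Omega>"
  shows "dd (\<lambda>(v, a, b). g v a b) (v, a, b) (0, \<alpha>, 0) = g v \<alpha> b"
proof (rule dd_eqI)
  show "((\<lambda>t. ((\<lambda>(v, a, b). g v a b) ((v, a, b) + t *\<^sub>R (0, \<alpha>, 0)) - (\<lambda>(v, a, b). g v a b) (v, a, b)) /\<^sub>R t)
      \<longlongrightarrow> g v \<alpha> b) (at 0)"
    using tendsto_const[of "g v \<alpha> b" "at (0::real)"]
    by (rule Lim_transform_eventually) (auto simp: eventually_at_filter riem_metric_bilinear[OF assms])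
qed

text \<open>Continuity of g is not assumed: by linearity in the fibre, g is itself a derivative
  of \<open>G(v, a, b) = g v a b\<close> in a fibre direction, hence continuous.\<close>

lemma metric_tendsto:
  fixes g :: "'v::{real_vector,t2_space} \<Rightarrow> 'v \<Rightarrow> 'v \<Rightarrow> real"
  assumes riem: "riem_metric \<Omega> g" and C1G: "C1_on (\<Omega> \<times> UNIV \<times> UNIV) (\<lambda>(v, a, b). g v a b)"
    and x: "(x \<longlongrightarrow> x0) F" "x0 \<in> \<Omega>" "eventually (\<lambda>k. x k \<in> \<Omega>) F"
    and a: "(a \<longlongrightarrow> a0) F" and b: "(b \<longlongrightarrow> b0) F"
  shows "((\<lambda>k. g (x k) (a k) (b k)) \<longlongrightarrow> g x0 a0 b0) F"
proof -
  let ?G = "\<lambda>(v, a, b). g v a b"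
  have cont: "continuous_on ((\<Omega> \<times> UNIV \<times> UNIV) \<times> UNIV) (\<lambda>(p, \<xi>). dd ?G p \<xi>)"
    using C1G unfolding C1_on_def by blast
  have "((\<lambda>k. ((x k, 0::'v, b k), (0::'v, a k, 0::'v))) \<longlongrightarrow> ((x0, 0, b0), (0, a0, 0))) F"
    by (intro tendsto_Pair x a b tendsto_const)
  from continuous_on_tendsto_compose[OF cont this]
  have "((\<lambda>k. dd ?G (x k, 0, b k) (0, a k, 0)) \<longlongrightarrow> dd ?G (x0, 0, b0) (0, a0, 0)) F"
    using x by (auto elim: eventually_mono)
  then show ?thesis
    unfolding dd_metric_fibre[OF riem x(2)]
    by (rule Lim_transform_eventually) (use x(3) in \<open>auto elim: eventually_mono simp: dd_metric_fibre[OF riem]\<close>)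
qed

lemma levi_civita_tendsto:
  fixes A :: "'v::{real_vector,t2_space} \<Rightarrow> 'v \<Rightarrow> 'v \<Rightarrow> 'v"
  assumes LC: "levi_civita \<Omega> g A"
    and x: "(x \<longlongrightarrow> x0) F" "x0 \<in> \<Omega>" "eventually (\<lambda>k. x k \<in> \<Omega>) F"
    and a: "(a \<longlongrightarrow> a0) F" and b: "(b \<longlongrightarrow> b0) F"
  shows "((\<lambda>k. A (x k) (a k) (b k)) \<longlongrightarrow> A x0 a0 b0) F"
proof -
  have cont: "continuous_on (\<Omega> \<times> UNIV \<times> UNIV) (\<lambda>(v, \<xi>, w). A v \<xi> w)"
    using LC unfolding levi_civita_def by blast
  have "((\<lambda>k. (x k, a k, b k)) \<longlongrightarrow> (x0, a0, b0)) F"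
    by (intro tendsto_Pair x a b)
  from continuous_on_tendsto_compose[OF cont this] show ?thesis
    using x by (auto elim: eventually_mono)
qed

text \<open>The Levi-Civita identity applied to constant vector fields.\<close>

lemma dd_metric_base:
  assumes LC: "levi_civita \<Omega> g A" and "v \<in> \<Omega>"
  shows "dd (\<lambda>(v, a, b). g v a b) (v, a, b) (w, 0, 0) = g v (A v w a) b + g v a (A v w b)"
proof (rule dd_eqI)
  have "((\<lambda>t::real. (g (v + t *\<^sub>R w) ((\<lambda>_. a) (v + t *\<^sub>R w)) ((\<lambda>_. b) (v + t *\<^sub>R w))
          - g v ((\<lambda>_. a) v) ((\<lambda>_. b) v)) / t)
      \<longlongrightarrow> g v (covD A w (\<lambda>_. a) v) ((\<lambda>_. b) v) + g v ((\<lambda>_. a) v) (covD A w (\<lambda>_. b) v)) (at 0)"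
    using LC \<open>v \<in> \<Omega>\<close> C1_on_const[of \<Omega> a] C1_on_const[of \<Omega> b] unfolding levi_civita_def by blast
  then show "((\<lambda>t. ((\<lambda>(v, a, b). g v a b) ((v, a, b) + t *\<^sub>R (w, 0, 0)) - (\<lambda>(v, a, b). g v a b) (v, a, b)) /\<^sub>R t)
      \<longlongrightarrow> g v (A v w a) b + g v a (A v w b)) (at 0)"
    by (simp add: covD_def dd_const divide_inverse mult.commute)
qed

lemma curv_zero_direction:
  fixes A :: "'v::{real_vector,t2_space} \<Rightarrow> 'v \<Rightarrow> 'v \<Rightarrow> 'v"
  assumes ops: "continuous_vector_ops TYPE('v)" and LC: "levi_civita \<Omega> g A"
    and "open \<Omega>" and v: "v \<in> \<Omega>"
  shows "curv A v w 0 u = 0"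
proof -
  have "((\<lambda>t::real. v + t *\<^sub>R w) \<longlongrightarrow> v + 0 *\<^sub>R w) (at 0)"
    by (intro tendsto_add_vector_ops[OF ops] tendsto_scaleR_vector_ops[OF ops] tendsto_const tendsto_ident_at)
  then have ev: "eventually (\<lambda>t::real. v + t *\<^sub>R w \<in> \<Omega>) (at 0)"
    using topological_tendstoD[OF _ \<open>open \<Omega>\<close>] v by simp
  have "dd (\<lambda>u'. A u' 0 u) v w = 0"
  proof (rule dd_eqI)
    show "((\<lambda>t. (A (v + t *\<^sub>R w) 0 u - A v 0 u) /\<^sub>R t) \<longlongrightarrow> 0) (at 0)"
      using tendsto_const[of "0::'v" "at (0::real)"]
      by (rule Lim_transform_eventually)
        (use ev in \<open>auto elim!: eventually_mono simp: levi_civita_linear[OF LC v] levi_civita_linear[OF LC]\<close>)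
  qed
  moreover have "dd (\<lambda>u'. A u' w u) v 0 = 0"
    by (rule dd_eqI) simp
  ultimately show ?thesis
    unfolding curv_def by (simp add: levi_civita_linear[OF LC v])
qed

text \<open>Mean value theorem for \<open>G(v, a, b) = g v a b\<close> on the segment from
  \<open>(a t, b s, c s)\<close> to \<open>(a s, b s, c s)\<close>, which stays in \<open>\<Omega> \<times> V \<times> V\<close> by local convexity.\<close>

lemma metric_base_diff_quotient_tendsto:
  fixes g :: "'v::{real_vector,t2_space} \<Rightarrow> 'v \<Rightarrow> 'v \<Rightarrow> real"
  assumes lcs: "lcs_type TYPE('v)" and "open \<Omega>"
    and C1G: "C1_on (\<Omega> \<times> UNIV \<times> UNIV) (\<lambda>(v, a, b). g v a b)" and LC: "levi_civita \<Omega> g A"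
    and "t \<in> S" "a t \<in> \<Omega>" and a: "has_vd S a t"
    and b: "(b \<longlongrightarrow> b t) (at t within S)" and c: "(c \<longlongrightarrow> c t) (at t within S)"
  shows "((\<lambda>s. (g (a s) (b s) (c s) - g (a t) (b s) (c s)) / (s - t)) \<longlongrightarrow>
      g (a t) (A (a t) (vderiv S a t) (b t)) (c t) + g (a t) (b t) (A (a t) (vderiv S a t) (c t)))
    (at t within S)"
proof -
  let ?F = "at t within S" and ?G = "\<lambda>(v, a, b). g v a b"
  have ops: "continuous_vector_ops TYPE('v)"
    using lcs by (rule lcs_type_continuous_vector_ops)
  define q where "q s = (a s - a t) /\<^sub>R (s - t)" for s
  have q: "(q \<longlongrightarrow> vderiv S a t) ?F"
    using a unfolding has_vd_def q_def .
  have h: "((\<lambda>s. s - t) \<longlongrightarrow> 0) ?F"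
    using tendsto_diff[OF tendsto_ident_at[of t S] tendsto_const[of t]] by simp
  have "((\<lambda>s. (s - t) *\<^sub>R q s) \<longlongrightarrow> 0) ?F"
    using tendsto_scaleR_vector_ops[OF ops h q] by simp
  from lcs_eventually_segment_in_open[OF lcs \<open>open \<Omega>\<close> \<open>a t \<in> \<Omega>\<close> this]
  have seg: "eventually (\<lambda>s. s - t \<noteq> 0 \<and>
      (\<forall>r\<in>{0..1}. (a t, b s, c s) + (r * (s - t)) *\<^sub>R (q s, 0, 0) \<in> \<Omega> \<times> UNIV \<times> UNIV)) ?F"
    unfolding eventually_at_filter by (rule eventually_mono) auto
  have ops3: "continuous_vector_ops TYPE('v \<times> 'v \<times> 'v)"
    by (intro continuous_vector_ops_prod ops)
  have "((\<lambda>s. (?G ((a t, b s, c s) + (s - t) *\<^sub>R (q s, 0, 0)) - ?G (a t, b s, c s)) / (s - t))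
      \<longlongrightarrow> dd ?G (a t, b t, c t) (vderiv S a t, 0, 0)) ?F"
    using \<open>a t \<in> \<Omega>\<close>
    by (intro C1_on_diff_quotient_tendsto[OF ops3 C1G _ _ _ h seg] tendsto_Pair tendsto_const b c q)
      simp
  then show ?thesis
    unfolding dd_metric_base[OF LC \<open>a t \<in> \<Omega>\<close>]
    by (rule Lim_transform_eventually) (auto simp: eventually_at_filter q_def)
qed

lemma has_vd_metric:
  fixes g :: "'v::{real_vector,t2_space} \<Rightarrow> 'v \<Rightarrow> 'v \<Rightarrow> real"
  assumes lcs: "lcs_type TYPE('v)" and "open \<Omega>" and riem: "riem_metric \<Omega> g"
    and C1G: "C1_on (\<Omega> \<times> UNIV \<times> UNIV) (\<lambda>(v, a, b). g v a b)" and LC: "levi_civita \<Omega> g A"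
    and "t \<in> S" "a t \<in> \<Omega>" "at t within S \<noteq> bot"
    and a: "has_vd S a t" and b: "has_vd S b t" and c: "has_vd S c t"
  shows "has_vd S (\<lambda>s. g (a s) (b s) (c s)) t \<and>
    vderiv S (\<lambda>s. g (a s) (b s) (c s)) t
      = g (a t) (covD_curve A S a b t) (c t) + g (a t) (b t) (covD_curve A S a c t)"
proof -
  let ?F = "at t within S"
  have ops: "continuous_vector_ops TYPE('v)"
    using lcs by (rule lcs_type_continuous_vector_ops)
  have b0: "(b \<longlongrightarrow> b t) ?F" and c0: "(c \<longlongrightarrow> c t) ?F"
    using has_vd_tendsto[OF ops] b c by blast+
  have fib: "((\<lambda>s. g (a t) ((b s - b t) /\<^sub>R (s - t)) (c s)) \<longlongrightarrow> g (a t) (vderiv S b t) (c t)) ?F"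
    "((\<lambda>s. g (a t) (b t) ((c s - c t) /\<^sub>R (s - t))) \<longlongrightarrow> g (a t) (b t) (vderiv S c t)) ?F"
    using b c \<open>a t \<in> \<Omega>\<close> unfolding has_vd_def
    by (auto intro!: metric_tendsto[OF riem C1G] b0 c0)
  have "((\<lambda>s. (g (a s) (b s) (c s) - g (a t) (b s) (c s)) / (s - t)
        + g (a t) ((b s - b t) /\<^sub>R (s - t)) (c s) + g (a t) (b t) ((c s - c t) /\<^sub>R (s - t)))
      \<longlongrightarrow> g (a t) (A (a t) (vderiv S a t) (b t)) (c t) + g (a t) (b t) (A (a t) (vderiv S a t) (c t))
        + g (a t) (vderiv S b t) (c t) + g (a t) (b t) (vderiv S c t)) ?F"
    by (intro tendsto_add fib metric_base_diff_quotient_tendsto[OF lcs \<open>open \<Omega>\<close> C1G LC] b0 c0)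
      (use assms in auto)
  also have "g (a t) (A (a t) (vderiv S a t) (b t)) (c t) + g (a t) (b t) (A (a t) (vderiv S a t) (c t))
        + g (a t) (vderiv S b t) (c t) + g (a t) (b t) (vderiv S c t)
      = g (a t) (covD_curve A S a b t) (c t) + g (a t) (b t) (covD_curve A S a c t)"
    by (simp add: covD_curve_def riem_metric_bilinear[OF riem \<open>a t \<in> \<Omega>\<close>])
  finally have "((\<lambda>s. (g (a s) (b s) (c s) - g (a t) (b t) (c t)) /\<^sub>R (s - t))
      \<longlongrightarrow> g (a t) (covD_curve A S a b t) (c t) + g (a t) (b t) (covD_curve A S a c t)) ?F"
    by (rule Lim_transform_eventually)
      (auto simp: eventually_at_filter riem_metric_bilinear[OF riem \<open>a t \<in> \<Omega>\<close>]
        divide_inverse algebra_simps)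
  then show ?thesis
    using \<open>?F \<noteq> bot\<close> by (rule has_vd_vderivI)
qed

section \<open>Second derivative along a Jacobi field\<close>

lemma has_vd_metric_vanishing:
  fixes g :: "'v::{real_vector,t2_space} \<Rightarrow> 'v \<Rightarrow> 'v \<Rightarrow> real"
  assumes riem: "riem_metric \<Omega> g" and C1G: "C1_on (\<Omega> \<times> UNIV \<times> UNIV) (\<lambda>(v, a, b). g v a b)"
    and xS: "\<forall>s\<in>S. x s \<in> \<Omega>" and "t \<in> S" "at t within S \<noteq> bot"
    and x: "(x \<longlongrightarrow> x t) (at t within S)" and a: "(a \<longlongrightarrow> a t) (at t within S)"
    and e: "has_vd S e t" and "e t = 0"
  shows "has_vd S (\<lambda>s. g (x s) (a s) (e s)) t \<and>
    vderiv S (\<lambda>s. g (x s) (a s) (e s)) t = g (x t) (a t) (vderiv S e t)"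
proof -
  have "((\<lambda>s. g (x s) (a s) ((e s - e t) /\<^sub>R (s - t))) \<longlongrightarrow> g (x t) (a t) (vderiv S e t)) (at t within S)"
    using e xS \<open>t \<in> S\<close> unfolding has_vd_def
    by (intro metric_tendsto[OF riem C1G x _ _ a]) (auto simp: eventually_at_filter)
  then have "((\<lambda>s. (g (x s) (a s) (e s) - g (x t) (a t) (e t)) /\<^sub>R (s - t))
      \<longlongrightarrow> g (x t) (a t) (vderiv S e t)) (at t within S)"
    by (rule Lim_transform_eventually)
      (use xS \<open>t \<in> S\<close> \<open>e t = 0\<close> in \<open>auto simp: eventually_at_filter riem_metric_bilinear[OF riem]
        divide_inverse mult.commute\<close>)
  then show ?thesis
    using \<open>at t within S \<noteq> bot\<close> by (rule has_vd_vderivI)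
qed

lemma has_vd_connection_vanishing:
  fixes A :: "'v::{real_vector,t2_space} \<Rightarrow> 'v \<Rightarrow> 'v \<Rightarrow> 'v"
  assumes LC: "levi_civita \<Omega> g A"
    and xS: "\<forall>s\<in>S. x s \<in> \<Omega>" and "t \<in> S" "at t within S \<noteq> bot"
    and x: "(x \<longlongrightarrow> x t) (at t within S)" and y: "(y \<longlongrightarrow> y t) (at t within S)"
    and e: "has_vd S e t" and "e t = 0"
  shows "has_vd S (\<lambda>s. A (x s) (y s) (e s)) t \<and>
    vderiv S (\<lambda>s. A (x s) (y s) (e s)) t = A (x t) (y t) (vderiv S e t)"
proof -
  have "((\<lambda>s. A (x s) (y s) ((e s - e t) /\<^sub>R (s - t))) \<longlongrightarrow> A (x t) (y t) (vderiv S e t)) (at t within S)"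
    using e xS \<open>t \<in> S\<close> unfolding has_vd_def
    by (intro levi_civita_tendsto[OF LC x _ _ y]) (auto simp: eventually_at_filter)
  then have "((\<lambda>s. (A (x s) (y s) (e s) - A (x t) (y t) (e t)) /\<^sub>R (s - t))
      \<longlongrightarrow> A (x t) (y t) (vderiv S e t)) (at t within S)"
    by (rule Lim_transform_eventually)
      (use xS \<open>t \<in> S\<close> \<open>e t = 0\<close> in \<open>auto simp: eventually_at_filter levi_civita_linear[OF LC]\<close>)
  then show ?thesis
    using \<open>at t within S \<noteq> bot\<close> by (rule has_vd_vderivI)
qed

lemma jacobi_field_covD_curve_at_zero:
  assumes ops: "continuous_vector_ops TYPE('v::{real_vector,t2_space})" and LC: "levi_civita \<Omega> g A"
    and "open \<Omega>" and "x t \<in> \<Omega>" and e: "jacobi_field A x S (e :: real \<Rightarrow> 'v)" and "t \<in> S" "e t = 0"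
  shows "covD_curve A S x e t = vderiv S e t" and "covD_curve A S x (covD_curve A S x e) t = 0"
proof -
  show "covD_curve A S x e t = vderiv S e t"
    unfolding covD_curve_def \<open>e t = 0\<close> by (simp add: levi_civita_linear[OF LC \<open>x t \<in> \<Omega>\<close>])
  have "covD_curve A S x (covD_curve A S x e) t = curv A (x t) (vderiv S x t) (e t) (vderiv S x t)"
    using e \<open>t \<in> S\<close> unfolding jacobi_field_def by blast
  also have "\<dots> = 0"
    unfolding \<open>e t = 0\<close> by (rule curv_zero_direction[OF ops LC \<open>open \<Omega>\<close> \<open>x t \<in> \<Omega>\<close>])
  finally show "covD_curve A S x (covD_curve A S x e) t = 0" .
qed

lemma second_vderiv_metric_jacobi_field:
  fixes g :: "'v::{real_vector,t2_space} \<Rightarrow> 'v \<Rightarrow> 'v \<Rightarrow> real"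
  assumes lcs: "lcs_type TYPE('v)" and "open \<Omega>" and riem: "riem_metric \<Omega> g"
    and C1G: "C1_on (\<Omega> \<times> UNIV \<times> UNIV) (\<lambda>(v, a, b). g v a b)" and LC: "levi_civita \<Omega> g A"
    and nontriv: "\<And>t. t \<in> S \<Longrightarrow> at t within S \<noteq> bot"
    and x: "C1_curve S x" "x ` S \<subseteq> \<Omega>" and \<xi>: "C1_curve S \<xi>"
    and e: "jacobi_field A x S e" "e \<tau> = 0" and "\<tau> \<in> S"
  shows "(\<forall>t\<in>S. has_vd S (\<lambda>t. g (x t) (\<xi> t) (e t)) t) \<and>
    has_vd S (vderiv S (\<lambda>t. g (x t) (\<xi> t) (e t))) \<tau> \<and>
    vderiv S (vderiv S (\<lambda>t. g (x t) (\<xi> t) (e t))) \<tau> = 2 * g (x \<tau>) (covD_curve A S x \<xi> \<tau>) (vderiv S e \<tau>)"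
proof -
  let ?F = "at \<tau> within S"
  define D\<xi> De where "D\<xi> = covD_curve A S x \<xi>" and "De = covD_curve A S x e"
  have ops: "continuous_vector_ops TYPE('v)"
    using lcs by (rule lcs_type_continuous_vector_ops)
  have xS: "\<forall>s\<in>S. x s \<in> \<Omega>" and "x \<tau> \<in> \<Omega>"
    using x(2) \<open>\<tau> \<in> S\<close> by auto
  have hvd: "has_vd S x t" "has_vd S \<xi> t" "has_vd S e t" "has_vd S (vderiv S e) t" if "t \<in> S" for t
    using x(1) \<xi> e(1) that unfolding jacobi_field_def C2_curve_def C1_curve_def by blast+
  have first: "has_vd S (\<lambda>t. g (x t) (\<xi> t) (e t)) t \<and>
      vderiv S (\<lambda>t. g (x t) (\<xi> t) (e t)) t = g (x t) (D\<xi> t) (e t) + g (x t) (\<xi> t) (De t)"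
    if "t \<in> S" for t
    unfolding D\<xi>_def De_def using xS that
    by (intro has_vd_metric[OF lcs \<open>open \<Omega>\<close> riem C1G LC] hvd nontriv) auto
  have x0: "(x \<longlongrightarrow> x \<tau>) ?F" and \<xi>0: "(\<xi> \<longlongrightarrow> \<xi> \<tau>) ?F"
    using has_vd_tendsto[OF ops] hvd \<open>\<tau> \<in> S\<close> by blast+
  have x'0: "(vderiv S x \<longlongrightarrow> vderiv S x \<tau>) ?F" and \<xi>'0: "(vderiv S \<xi> \<longlongrightarrow> vderiv S \<xi> \<tau>) ?F"
    using x(1) \<xi> \<open>\<tau> \<in> S\<close> unfolding C1_curve_def continuous_on_def by blast+
  have xev: "eventually (\<lambda>s. x s \<in> \<Omega>) ?F"
    using xS by (auto simp: eventually_at_filter)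
  have "(D\<xi> \<longlongrightarrow> D\<xi> \<tau>) ?F"
    unfolding D\<xi>_def covD_curve_def
    by (intro tendsto_add_vector_ops[OF ops] levi_civita_tendsto[OF LC x0 \<open>x \<tau> \<in> \<Omega>\<close> xev] x'0 \<xi>'0 \<xi>0)
  then have d1: "has_vd S (\<lambda>s. g (x s) (D\<xi> s) (e s)) \<tau> \<and>
      vderiv S (\<lambda>s. g (x s) (D\<xi> s) (e s)) \<tau> = g (x \<tau>) (D\<xi> \<tau>) (vderiv S e \<tau>)"
    by (intro has_vd_metric_vanishing[OF riem C1G xS \<open>\<tau> \<in> S\<close> nontriv x0] hvd e(2) \<open>\<tau> \<in> S\<close>)
  have "has_vd S (\<lambda>s. A (x s) (vderiv S x s) (e s)) \<tau>"
    using has_vd_connection_vanishing[OF LC xS \<open>\<tau> \<in> S\<close> nontriv x0 x'0 hvd(3) e(2)] \<open>\<tau> \<in> S\<close> by blast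
  then have "has_vd S De \<tau>"
    unfolding De_def covD_curve_def using has_vd_add[OF ops nontriv hvd(4)] \<open>\<tau> \<in> S\<close> by blast
  then have d2: "has_vd S (\<lambda>s. g (x s) (\<xi> s) (De s)) \<tau> \<and>
      vderiv S (\<lambda>s. g (x s) (\<xi> s) (De s)) \<tau>
        = g (x \<tau>) (D\<xi> \<tau>) (De \<tau>) + g (x \<tau>) (\<xi> \<tau>) (covD_curve A S x De \<tau>)"
    unfolding D\<xi>_def using \<open>x \<tau> \<in> \<Omega>\<close> \<open>\<tau> \<in> S\<close>
    by (intro has_vd_metric[OF lcs \<open>open \<Omega>\<close> riem C1G LC] hvd nontriv)
  have De0: "De \<tau> = vderiv S e \<tau>" and DDe0: "covD_curve A S x De \<tau> = 0"
    unfolding De_def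
    by (intro jacobi_field_covD_curve_at_zero[OF ops LC \<open>open \<Omega>\<close> \<open>x \<tau> \<in> \<Omega>\<close> e(1) \<open>\<tau> \<in> S\<close> e(2)])+
  have "has_vd S (\<lambda>s. g (x s) (D\<xi> s) (e s) + g (x s) (\<xi> s) (De s)) \<tau> \<and>
      vderiv S (\<lambda>s. g (x s) (D\<xi> s) (e s) + g (x s) (\<xi> s) (De s)) \<tau> = 2 * g (x \<tau>) (D\<xi> \<tau>) (vderiv S e \<tau>)"
    using has_vd_add[OF continuous_vector_ops_real_normed_vector nontriv[OF \<open>\<tau> \<in> S\<close>]
        conjunct1[OF d1] conjunct1[OF d2]] d1 d2
    by (simp add: De0 DDe0 riem_metric_bilinear[OF riem \<open>x \<tau> \<in> \<Omega>\<close>])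
  moreover have "vderiv S (\<lambda>t. g (x t) (\<xi> t) (e t)) s = g (x s) (D\<xi> s) (e s) + g (x s) (\<xi> s) (De s)"
    if "s \<in> S" for s
    using first[OF that] by blast
  note vderiv_cong[of S, OF this \<open>\<tau> \<in> S\<close>]
  ultimately show ?thesis
    unfolding D\<xi>_def[symmetric] using first by auto
qed

lemma riem_metric_orthogonal_dense_eq_0:
  assumes riem: "riem_metric \<Omega> g" and C1G: "C1_on (\<Omega> \<times> UNIV \<times> UNIV) (\<lambda>(v, a, b). g v a b)"
    and "v \<in> \<Omega>" and "closure D = UNIV" and "\<forall>w\<in>D. g v u w = 0"
  shows "u = 0"
proof -
  have "isCont (g v u) w" for w
    unfolding isCont_def using \<open>v \<in> \<Omega>\<close>
    by (intro metric_tendsto[OF riem C1G tendsto_const _ _ tendsto_const tendsto_ident_at]) simp_all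
  then have "closed (g v u -` {0})"
    by (intro continuous_closed_vimage closed_singleton) blast
  then have "closure D \<subseteq> g v u -` {0}"
    using \<open>\<forall>w\<in>D. g v u w = 0\<close> by (intro closure_minimal) auto
  then have "g v u u = 0"
    using \<open>closure D = UNIV\<close> by auto
  then show "u = 0"
    using riem \<open>v \<in> \<Omega>\<close> unfolding riem_metric_def by force
qed

theorem lemma7p2:
  fixes \<Omega> :: "'v::{real_vector,t2_space} set"
    and g :: "'v \<Rightarrow> 'v \<Rightarrow> 'v \<Rightarrow> real"
    and A :: "'v \<Rightarrow> 'v \<Rightarrow> 'v \<Rightarrow> 'v"
    and I :: "real set" and x \<xi> :: "real \<Rightarrow> 'v" and \<tau> :: real
    and H :: "'i set" and J :: "'i \<Rightarrow> real set" and \<eta> :: "'i \<Rightarrow> real \<Rightarrow> 'v"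
  assumes lcs: "lcs_type TYPE('v)"
    and \<Omega>: "open \<Omega>"
    and g: "riem_metric \<Omega> g" "C1_on (\<Omega> \<times> UNIV \<times> UNIV) (\<lambda>(v, a, b). g v a b)"
    and A: "levi_civita \<Omega> g A" "C1_on (\<Omega> \<times> UNIV \<times> UNIV) (\<lambda>(v, a, w). A v a w)"
    and I: "is_interval I" "\<exists>a\<in>I. \<exists>b\<in>I. a < b"
    and x: "geodesic \<Omega> A I x"
    and \<xi>: "C1_curve I \<xi>"
    and \<tau>: "\<tau> \<in> I"
    and J: "\<And>i. i \<in> H \<Longrightarrow> is_interval (J i) \<and> J i \<subseteq> I \<and> \<tau> \<in> J i \<and> (\<exists>e>0. I \<inter> ball \<tau> e \<subseteq> J i)"
    and jac: "\<And>i. i \<in> H \<Longrightarrow> jacobi_field A x (J i) (\<eta> i) \<and> \<eta> i \<tau> = 0"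
    and dense: "closure ((\<lambda>i. vderiv (J i) (\<eta> i) \<tau>) ` H) = UNIV"
  shows "(\<forall>i\<in>H. twice_diff_at (J i) (\<lambda>t. g (x t) (\<xi> t) (\<eta> i t)) \<tau>) \<and>
         (covD_curve A I x \<xi> \<tau> = 0 \<longleftrightarrow>
            (\<forall>i\<in>H. vderiv (J i) (vderiv (J i) (\<lambda>t. g (x t) (\<xi> t) (\<eta> i t))) \<tau> = 0))"
proof -
  have xC: "C1_curve I x" and "x ` I \<subseteq> \<Omega>"
    using x unfolding geodesic_def C2_curve_def by blast+
  obtain a b where "a \<in> I" "b \<in> I" "a < b"
    using I(2) by blast
  have second: "(\<forall>t\<in>J i. has_vd (J i) (\<lambda>t. g (x t) (\<xi> t) (\<eta> i t)) t) \<and>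
      has_vd (J i) (vderiv (J i) (\<lambda>t. g (x t) (\<xi> t) (\<eta> i t))) \<tau> \<and>
      vderiv (J i) (vderiv (J i) (\<lambda>t. g (x t) (\<xi> t) (\<eta> i t))) \<tau>
        = 2 * g (x \<tau>) (covD_curve A I x \<xi> \<tau>) (vderiv (J i) (\<eta> i) \<tau>)"
    if "i \<in> H" for i
  proof -
    obtain e where Ji: "is_interval (J i)" "J i \<subseteq> I" "\<tau> \<in> J i" and "e > 0" "I \<inter> ball \<tau> e \<subseteq> J i"
      using J[OF \<open>i \<in> H\<close>] by blast
    then have nontriv: "at t within J i \<noteq> bot" if "t \<in> J i" for t
      using interval_nbhd_at_within_nontrivial[OF I(1) \<open>a \<in> I\<close> \<open>b \<in> I\<close> \<open>a < b\<close> \<tau>] that by blast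
    have "covD_curve A (J i) x \<xi> \<tau> = covD_curve A I x \<xi> \<tau>"
      unfolding covD_curve_def
      using C1_curve_subset(2)[OF xC Ji(2) nontriv Ji(3)] C1_curve_subset(2)[OF \<xi> Ji(2) nontriv Ji(3)]
      by simp
    moreover have "x ` J i \<subseteq> \<Omega>"
      using Ji(2) \<open>x ` I \<subseteq> \<Omega>\<close> by blast
    ultimately show ?thesis
      using second_vderiv_metric_jacobi_field[OF lcs \<Omega> g A(1) nontriv
          C1_curve_subset(1)[OF xC Ji(2) nontriv] _ C1_curve_subset(1)[OF \<xi> Ji(2) nontriv] _ _ Ji(3)]
        jac[OF \<open>i \<in> H\<close>]
      by simp
  qed
  then have "\<forall>i\<in>H. twice_diff_at (J i) (\<lambda>t. g (x t) (\<xi> t) (\<eta> i t)) \<tau>"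
    unfolding twice_diff_at_def by (meson IntD1 zero_less_one)
  moreover have "covD_curve A I x \<xi> \<tau> = 0 \<longleftrightarrow>
      (\<forall>i\<in>H. vderiv (J i) (vderiv (J i) (\<lambda>t. g (x t) (\<xi> t) (\<eta> i t))) \<tau> = 0)"
    using second riem_metric_orthogonal_dense_eq_0[OF g _ dense, of "x \<tau>"] \<tau> \<open>x ` I \<subseteq> \<Omega>\<close>
    by (auto simp: riem_metric_bilinear[OF g(1)])
  ultimately show ?thesis ..
qed

end
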